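(* Let $\lambda>0$ and let $\mu(t)$ solve $\dot\mu=-\mu\,(\mathcal K_\mu+\lambda I)^{-1}\mathcal K_\mu\frac{\delta F}{\delta\mu}[\mu]$. Then for every $0\le s\le1$, $$\frac{d}{dt}F(\mu(t))\le-\Big\|\frac{\delta F}{\delta\mu}[\mu_t]\Big\|^2_{L^2_{\mu_t}}+\lambda^s\Big\|(\mathcal K_{\mu_t}+\lambda I)^{-s/2}\frac{\delta F}{\delta\mu}[\mu_t]\Big\|^2_{L^2_{\mu_t}}.$$
   Context: $k$: symmetric positive definite bounded kernel; $\mathcal K_\mu f(x)=\int k(x,x')f(x')d\mu(x')$ is a compact positive self-adjoint operator on $L^2_\mu$ with spectral decomposition (eigenvalues $\sigma_j\ge0$, orthonormal eigenbasis $e_j$), and powers are defined spectrally. $\frac{\delta F}{\delta\mu}$: first variation, assumed in $L^2_\mu$; $\frac{d}{dt}F(\mu(t))=\int\frac{\delta F}{\delta\mu}d\dot\mu$. *)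

theory Defs
  imports "HOL-Analysis.Analysis"
begin

definition L2 :: "'a measure \<Rightarrow> ('a \<Rightarrow> real) \<Rightarrow> bool" where
  "L2 \<mu> f \<longleftrightarrow> f \<in> borel_measurable \<mu> \<and> integrable \<mu> (\<lambda>x. (f x)\<^sup>2)"

definition L2ip :: "'a measure \<Rightarrow> ('a \<Rightarrow> real) \<Rightarrow> ('a \<Rightarrow> real) \<Rightarrow> real" where
  "L2ip \<mu> f g = (\<integral>x. f x * g x \<partial>\<mu>)"

definition L2norm2 :: "'a measure \<Rightarrow> ('a \<Rightarrow> real) \<Rightarrow> real" where
  "L2norm2 \<mu> f = (\<integral>x. (f x)\<^sup>2 \<partial>\<mu>)"

definition Kop :: "('a \<Rightarrow> 'a \<Rightarrow> real) \<Rightarrow> 'a measure \<Rightarrow> ('a \<Rightarrow> real) \<Rightarrow> 'a \<Rightarrow> real" where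
  "Kop k \<mu> f x = (\<integral>y. k x y * f y \<partial>\<mu>)"

definition spd_bounded_kernel :: "'a measure \<Rightarrow> ('a \<Rightarrow> 'a \<Rightarrow> real) \<Rightarrow> bool" where
  "spd_bounded_kernel M k \<longleftrightarrow>
     (\<forall>x y. k x y = k y x) \<and>
     (\<forall>S c. finite S \<longrightarrow> (\<Sum>x\<in>S. \<Sum>y\<in>S. c x * c y * k x y) \<ge> 0) \<and>
     (\<exists>B. \<forall>x y. \<bar>k x y\<bar> \<le> B) \<and>
     (\<lambda>(x, y). k x y) \<in> borel_measurable (M \<Otimes>\<^sub>M M)"

definition L2_expansion :: "'a measure \<Rightarrow> 'b set \<Rightarrow> ('b \<Rightarrow> real) \<Rightarrow> ('b \<Rightarrow> 'a \<Rightarrow> real)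
    \<Rightarrow> ('a \<Rightarrow> real) \<Rightarrow> bool" where
  "L2_expansion \<mu> J c e h \<longleftrightarrow>
     ((\<lambda>F. \<integral>x. (h x - (\<Sum>j\<in>F. c j * e j x))\<^sup>2 \<partial>\<mu>) \<longlongrightarrow> 0) (finite_subsets_at_top J)"

definition eigen_ONB :: "('a \<Rightarrow> 'a \<Rightarrow> real) \<Rightarrow> 'a measure \<Rightarrow> 'b set \<Rightarrow> ('b \<Rightarrow> 'a \<Rightarrow> real)
    \<Rightarrow> ('b \<Rightarrow> real) \<Rightarrow> bool" where
  "eigen_ONB k \<mu> J e \<sigma> \<longleftrightarrow>
     (\<forall>j\<in>J. L2 \<mu> (e j)) \<and>
     (\<forall>i\<in>J. \<forall>j\<in>J. L2ip \<mu> (e i) (e j) = (if i = j then 1 else 0)) \<and>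
     (\<forall>f. L2 \<mu> f \<longrightarrow> L2_expansion \<mu> J (\<lambda>j. L2ip \<mu> f (e j)) e f) \<and>
     (\<forall>j\<in>J. \<sigma> j \<ge> 0 \<and> (AE x in \<mu>. Kop k \<mu> (e j) x = \<sigma> j * e j x))"

text \<open>Spectral functional calculus: h = phi(K_mu) f, i.e.
  h = sum_j phi(sigma_j) <f, e_j> e_j in L2 of mu.\<close>
definition spec_fun :: "'a measure \<Rightarrow> 'b set \<Rightarrow> ('b \<Rightarrow> 'a \<Rightarrow> real) \<Rightarrow> ('b \<Rightarrow> real)
    \<Rightarrow> (real \<Rightarrow> real) \<Rightarrow> ('a \<Rightarrow> real) \<Rightarrow> ('a \<Rightarrow> real) \<Rightarrow> bool" where
  "spec_fun \<mu> J e \<sigma> \<phi> f h \<longleftrightarrow>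
     L2 \<mu> h \<and> L2_expansion \<mu> J (\<lambda>j. \<phi> (\<sigma> j) * L2ip \<mu> f (e j)) e h"

end

theory Submission
  imports Defs
begin

text \<open>Expand in the eigenbasis of K_mu and write c_j for the coefficients of g = dF/d mu; by
  self-adjointness K_mu g has coefficients sigma_j c_j. The flow and the chain rule give
  d/dt F = -<g, v> = -(sum_j sigma_j/(sigma_j + lam) c_j^2), and by Parseval the right-hand side is
  sum_j (lam^s (sigma_j + lam)^(-s) - 1) c_j^2. So it suffices that
  1 - sigma/(sigma + lam) = r \<le> r^s for r = lam/(sigma + lam) \<in> (0,1], which holds for every
  s \<le> 1.\<close>

lemma L2_mult_integrable:
  assumes "L2 N f" "L2 N g" shows "integrable N (\<lambda>x. f x * g x)"
proof (rule Bochner_Integration.integrable_bound)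
  show "integrable N (\<lambda>x. (f x)\<^sup>2 + (g x)\<^sup>2)" using assms unfolding L2_def by auto
  show "(\<lambda>x. f x * g x) \<in> borel_measurable N" using assms unfolding L2_def by auto
  have "\<bar>f x * g x\<bar> \<le> (f x)\<^sup>2 + (g x)\<^sup>2" for x
    using sum_squares_bound[of "\<bar>f x\<bar>" "\<bar>g x\<bar>"] abs_ge_zero[of "f x * g x"]
    unfolding abs_mult power2_abs by linarith
  then show "AE x in N. norm (f x * g x) \<le> norm ((f x)\<^sup>2 + (g x)\<^sup>2)" by simp
qed

lemma L2_add: assumes "L2 N f" "L2 N g" shows "L2 N (\<lambda>x. f x + g x)"
proof -
  have "(\<lambda>x. (f x + g x)\<^sup>2) = (\<lambda>x. (f x)\<^sup>2 + (g x)\<^sup>2 + 2 * (f x * g x))"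
    by (auto simp: power2_sum)
  then show ?thesis using assms L2_mult_integrable[OF assms] unfolding L2_def by auto
qed

lemma L2_cmult: assumes "L2 N f" shows "L2 N (\<lambda>x. c * f x)"
  using assms unfolding L2_def by (auto simp: power_mult_distrib)

lemma L2_sum:
  assumes "\<And>j. j \<in> F \<Longrightarrow> L2 N (u j)" shows "L2 N (\<lambda>x. \<Sum>j\<in>F. u j x)"
  using assms
proof (induction F rule: infinite_finite_induct)
  case (infinite F)
  then show ?case by (simp add: L2_def)
next
  case empty
  then show ?case by (simp add: L2_def)
next
  case (insert a F)
  then show ?case by (simp add: L2_add)
qed

lemma L2_integrable: "finite_measure N \<Longrightarrow> L2 N f \<Longrightarrow> integrable N f"
  unfolding L2_def by (auto intro: finite_measure.square_integrable_imp_integrable)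

lemma L2norm2_eq_L2ip: "L2norm2 N f = L2ip N f f"
  unfolding L2norm2_def L2ip_def by (simp add: power2_eq_square)

lemma square_le_if_quadratic_nonneg:
  fixes A B C :: real
  assumes nonneg: "\<And>t. t\<^sup>2 * A - 2 * t * C + B \<ge> 0" and "A \<ge> 0"
  shows "C\<^sup>2 \<le> A * B"
proof (cases "A = 0")
  case True
  have "C = 0"
  proof (rule ccontr)
    assume "C \<noteq> 0"
    then show False
      using nonneg[of "(\<bar>B\<bar> + 1) / (2 * C)"] True by simp
  qed
  with True show ?thesis by simp
next
  case False
  with \<open>A \<ge> 0\<close> have "A > 0" by simp
  with nonneg[of "C / A"] show ?thesis by (simp add: field_simps power2_eq_square)
qed

lemma L2_Cauchy_Schwarz:
  assumes f: "L2 N f" and g: "L2 N g"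
  shows "(L2ip N f g)\<^sup>2 \<le> L2norm2 N f * L2norm2 N g"
  unfolding L2ip_def L2norm2_def
proof (rule square_le_if_quadratic_nonneg)
  fix t :: real
  have expand: "(\<lambda>x. (t * f x - g x)\<^sup>2) = (\<lambda>x. t\<^sup>2 * (f x)\<^sup>2 - 2 * t * (f x * g x) + (g x)\<^sup>2)"
    by (auto simp: power2_eq_square algebra_simps)
  have "0 \<le> (\<integral>x. (t * f x - g x)\<^sup>2 \<partial>N)" by simp
  also have "\<dots> = t\<^sup>2 * (\<integral>x. (f x)\<^sup>2 \<partial>N) - 2 * t * (\<integral>x. f x * g x \<partial>N) + (\<integral>x. (g x)\<^sup>2 \<partial>N)"
    using f g L2_mult_integrable[OF f g] unfolding expand L2_def by simp
  finally show "t\<^sup>2 * (\<integral>x. (f x)\<^sup>2 \<partial>N) - 2 * t * (\<integral>x. f x * g x \<partial>N) + (\<integral>x. (g x)\<^sup>2 \<partial>N) \<ge> 0" .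
qed simp

text \<open>Taking inner products with g is continuous, so it commutes with the L2-convergent
  expansion; the error is controlled by Cauchy-Schwarz.\<close>
lemma L2_expansion_L2ip_has_sum:
  assumes e: "\<And>j. j \<in> J \<Longrightarrow> L2 N (e j)" and f: "L2 N f" and g: "L2 N g"
    and expansion: "L2_expansion N J a e f"
  shows "((\<lambda>j. a j * L2ip N g (e j)) has_sum L2ip N g f) J"
proof -
  define R where "R = (\<lambda>F x. f x - (\<Sum>j\<in>F. a j * e j x))"
  define err where "err = (\<lambda>F. L2ip N g f - (\<Sum>j\<in>F. a j * L2ip N g (e j)))"
  have err_eq: "err F = L2ip N g (R F)" if "F \<subseteq> J" for F
  proof -
    have eF: "\<And>j. j \<in> F \<Longrightarrow> L2 N (\<lambda>x. a j * e j x)" using that e L2_cmult by blast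
    have "(\<Sum>j\<in>F. a j * L2ip N g (e j)) = (\<integral>x. (\<Sum>j\<in>F. g x * (a j * e j x)) \<partial>N)"
      unfolding L2ip_def using L2_mult_integrable[OF g eF]
      by (simp add: integral_sum mult.left_commute)
    then show ?thesis
      unfolding err_def R_def L2ip_def
      using L2_mult_integrable[OF g f]
        L2_mult_integrable[OF g L2_sum[where u="\<lambda>j x. a j * e j x", OF eF]]
      by (simp add: right_diff_distrib sum_distrib_left)
  qed
  have R_L2: "L2 N (R F)" if "F \<subseteq> J" for F
  proof -
    have partial_sum: "L2 N (\<lambda>x. \<Sum>j\<in>F. a j * e j x)" using that by (intro L2_sum L2_cmult e) auto
    show ?thesis using L2_add[OF f L2_cmult[OF partial_sum, where c="-1"]] unfolding R_def by simp
  qed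
  have bound: "\<bar>err F\<bar> \<le> sqrt (L2norm2 N g * L2norm2 N (R F))" if "F \<subseteq> J" for F
  proof -
    have "(err F)\<^sup>2 \<le> L2norm2 N g * L2norm2 N (R F)"
      using L2_Cauchy_Schwarz[OF g R_L2[OF that]] err_eq[OF that] by simp
    then show ?thesis by (metis real_sqrt_abs real_sqrt_le_mono)
  qed
  have "((\<lambda>F. sqrt (L2norm2 N g * L2norm2 N (R F))) \<longlongrightarrow> sqrt (L2norm2 N g * 0))
      (finite_subsets_at_top J)"
    using expansion unfolding L2_expansion_def L2norm2_def R_def by (intro tendsto_intros)
  then have "((\<lambda>F. sqrt (L2norm2 N g * L2norm2 N (R F))) \<longlongrightarrow> 0) (finite_subsets_at_top J)"
    by simp
  then have "((\<lambda>F. \<bar>err F\<bar>) \<longlongrightarrow> 0) (finite_subsets_at_top J)"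
    by (rule tendsto_sandwich[OF _ _ tendsto_const, rotated 2])
      (auto intro: eventually_finite_subsets_at_top_weakI bound)
  then have "((\<lambda>F. L2ip N g f - err F) \<longlongrightarrow> L2ip N g f - 0) (finite_subsets_at_top J)"
    by (intro tendsto_intros) (simp add: tendsto_rabs_zero_iff)
  then show ?thesis unfolding has_sum_def err_def by simp
qed

lemma L2_expansion_coeff:
  assumes e: "\<And>j. j \<in> J \<Longrightarrow> L2 N (e j)"
    and orthonormal: "\<forall>i\<in>J. \<forall>j\<in>J. L2ip N (e i) (e j) = (if i = j then 1 else 0)"
    and f: "L2 N f" and expansion: "L2_expansion N J a e f" and i: "i \<in> J"
  shows "L2ip N f (e i) = a i"
proof -
  have sum_J: "((\<lambda>j. a j * L2ip N (e i) (e j)) has_sum L2ip N (e i) f) J"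
    by (rule L2_expansion_L2ip_has_sum[OF e f e[OF i] expansion])
  have "((\<lambda>j. a j * L2ip N (e i) (e j)) has_sum a i) {i}"
    using has_sum_finite[of "{i}" "\<lambda>j. a j * L2ip N (e i) (e j)"] orthonormal i by simp
  then have sum_i: "((\<lambda>j. a j * L2ip N (e i) (e j)) has_sum a i) J"
    using orthonormal i by (subst has_sum_cong_neutral[where T="{i}"]) auto
  have "L2ip N (e i) f = a i" using has_sum_unique[OF sum_J sum_i] .
  then show ?thesis by (simp add: L2ip_def mult.commute)
qed

lemma L2_expansion_Parseval:
  assumes e: "\<And>j. j \<in> J \<Longrightarrow> L2 N (e j)"
    and orthonormal: "\<forall>i\<in>J. \<forall>j\<in>J. L2ip N (e i) (e j) = (if i = j then 1 else 0)"
    and f: "L2 N f" and expansion: "L2_expansion N J a e f"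
  shows "((\<lambda>j. (a j)\<^sup>2) has_sum L2norm2 N f) J"
proof -
  have "((\<lambda>j. a j * L2ip N f (e j)) has_sum L2norm2 N f) J"
    unfolding L2norm2_eq_L2ip by (rule L2_expansion_L2ip_has_sum[OF e f f expansion])
  then show ?thesis
    using L2_expansion_coeff[OF e orthonormal f expansion]
    by (subst has_sum_cong[where g="\<lambda>j. a j * L2ip N f (e j)"]) (auto simp: power2_eq_square)
qed

lemma spd_bounded_kernel_measurable_pair:
  assumes "sets N = sets M" and "spd_bounded_kernel M k"
  shows "(\<lambda>(x, y). k x y) \<in> borel_measurable (N \<Otimes>\<^sub>M N)"
proof -
  have "(\<lambda>(x, y). k x y) \<in> borel_measurable (M \<Otimes>\<^sub>M M)"
    using assms(2) unfolding spd_bounded_kernel_def by blast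
  moreover have "sets (N \<Otimes>\<^sub>M N) = sets (M \<Otimes>\<^sub>M M)"
    using assms(1) by (rule sets_pair_measure_cong) (rule assms(1))
  ultimately show ?thesis using measurable_cong_sets by blast
qed

lemma kernel_product_integrable:
  assumes "finite_measure N" and "sets N = sets M" and kernel: "spd_bounded_kernel M k"
    and f: "integrable N f" and g: "integrable N g"
  shows "integrable (N \<Otimes>\<^sub>M N) (\<lambda>(x, y). f x * k x y * g y)"
proof -
  interpret finite_measure N by fact
  interpret P: pair_sigma_finite N N
    by (simp add: pair_sigma_finite_def sigma_finite_measure_axioms)
  obtain B where B: "\<And>x y. \<bar>k x y\<bar> \<le> B" using kernel unfolding spd_bounded_kernel_def by blast
  have [measurable]: "(\<lambda>(x, y). k x y) \<in> borel_measurable (N \<Otimes>\<^sub>M N)"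
    using assms(2,3) by (rule spd_bounded_kernel_measurable_pair)
  have [measurable]: "f \<in> borel_measurable N" "g \<in> borel_measurable N" using f g by auto
  have "integrable (N \<Otimes>\<^sub>M N) (\<lambda>(x, y). B * \<bar>f x\<bar> * \<bar>g y\<bar>)"
  proof (rule P.Fubini_integrable)
    show "(\<lambda>(x, y). B * \<bar>f x\<bar> * \<bar>g y\<bar>) \<in> borel_measurable (N \<Otimes>\<^sub>M N)" by measurable
    have "(\<lambda>x. \<integral>y. norm (B * \<bar>f x\<bar> * \<bar>g y\<bar>) \<partial>N) = (\<lambda>x. \<bar>B\<bar> * (\<integral>y. \<bar>g y\<bar> \<partial>N) * \<bar>f x\<bar>)"
      by (simp add: abs_mult mult_ac)
    then show "integrable N (\<lambda>x. \<integral>y. norm ((\<lambda>(x, y). B * \<bar>f x\<bar> * \<bar>g y\<bar>) (x, y)) \<partial>N)"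
      using f by simp
    show "AE x in N. integrable N (\<lambda>y. (\<lambda>(x, y). B * \<bar>f x\<bar> * \<bar>g y\<bar>) (x, y))"
      using g by simp
  qed
  then show ?thesis
  proof (rule Bochner_Integration.integrable_bound)
    show "(\<lambda>(x, y). f x * k x y * g y) \<in> borel_measurable (N \<Otimes>\<^sub>M N)" by measurable
    have "\<bar>f x * k x y * g y\<bar> \<le> \<bar>B * \<bar>f x\<bar> * \<bar>g y\<bar>\<bar>" for x y
    proof -
      have "\<bar>f x * k x y * g y\<bar> = \<bar>k x y\<bar> * (\<bar>f x\<bar> * \<bar>g y\<bar>)" by (simp add: abs_mult)
      also have "\<dots> \<le> B * (\<bar>f x\<bar> * \<bar>g y\<bar>)" by (rule mult_right_mono[OF B]) simp
      also have "\<dots> \<le> \<bar>B * \<bar>f x\<bar> * \<bar>g y\<bar>\<bar>" by (simp add: mult.assoc)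
      finally show ?thesis .
    qed
    then show "AE p in N \<Otimes>\<^sub>M N. norm ((\<lambda>(x, y). f x * k x y * g y) p)
        \<le> norm ((\<lambda>(x, y). B * \<bar>f x\<bar> * \<bar>g y\<bar>) p)"
      by (intro AE_I2) (auto split: prod.split)
  qed
qed

lemma Kop_measurable:
  assumes "finite_measure N" and "sets N = sets M" and "spd_bounded_kernel M k"
    and [measurable]: "f \<in> borel_measurable N"
  shows "Kop k N f \<in> borel_measurable N"
proof -
  interpret finite_measure N by fact
  have [measurable]: "(\<lambda>(x, y). k x y) \<in> borel_measurable (N \<Otimes>\<^sub>M N)"
    using assms(2,3) by (rule spd_bounded_kernel_measurable_pair)
  show ?thesis unfolding Kop_def by measurable
qed

text \<open>Self-adjointness of the integral operator: Fubini plus symmetry of the kernel.\<close>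
lemma L2ip_Kop_commute:
  assumes "finite_measure N" and "sets N = sets M" and kernel: "spd_bounded_kernel M k"
    and f: "integrable N f" and g: "integrable N g"
  shows "L2ip N (Kop k N f) g = L2ip N f (Kop k N g)"
proof -
  interpret finite_measure N by fact
  interpret P: pair_sigma_finite N N
    by (simp add: pair_sigma_finite_def sigma_finite_measure_axioms)
  have sym: "\<And>x y. k x y = k y x" using kernel unfolding spd_bounded_kernel_def by blast
  have "L2ip N (Kop k N f) g = (\<integral>x. g x * (\<integral>y. k x y * f y \<partial>N) \<partial>N)"
    unfolding L2ip_def Kop_def by (simp add: mult.commute)
  also have "\<dots> = (\<integral>x. (\<integral>y. g x * k x y * f y \<partial>N) \<partial>N)"
    by (simp add: mult.assoc)
  also have "\<dots> = (\<integral>y. (\<integral>x. g x * k x y * f y \<partial>N) \<partial>N)"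
    using P.Fubini_integral[OF kernel_product_integrable[OF assms(1-3) g f]] by simp
  also have "\<dots> = (\<integral>y. f y * (\<integral>x. k y x * g x \<partial>N) \<partial>N)"
  proof (rule Bochner_Integration.integral_cong[OF refl])
    fix y
    have "(\<lambda>x. g x * k x y * f y) = (\<lambda>x. f y * (k y x * g x))"
      by (auto simp: sym[of _ y] mult_ac)
    then show "(\<integral>x. g x * k x y * f y \<partial>N) = f y * (\<integral>x. k y x * g x \<partial>N)" by simp
  qed
  also have "\<dots> = L2ip N f (Kop k N g)"
    unfolding L2ip_def Kop_def ..
  finally show ?thesis .
qed

lemma L2ip_Kop_eigenfunction:
  assumes "finite_measure N" and "sets N = sets M" and "spd_bounded_kernel M k"
    and f: "integrable N f" and e: "integrable N e"
    and eigen: "AE x in N. Kop k N e x = c * e x"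
  shows "L2ip N (Kop k N f) e = c * L2ip N f e"
proof -
  have "L2ip N (Kop k N f) e = (\<integral>x. f x * Kop k N e x \<partial>N)"
    using L2ip_Kop_commute[OF assms(1-3) f e] unfolding L2ip_def .
  also have "\<dots> = (\<integral>x. f x * (c * e x) \<partial>N)"
    using Kop_measurable[OF assms(1-3), of e] f e eigen
    by (intro integral_cong_AE) auto
  finally show ?thesis unfolding L2ip_def by (simp add: mult_ac)
qed

lemma spectral_weight_ge_one:
  fixes sg lam s :: real
  assumes "sg \<ge> 0" and "lam > 0" and "s \<le> 1"
  shows "1 \<le> sg / (sg + lam) + lam powr s * ((sg + lam) powr (- s / 2))\<^sup>2"
proof -
  define x where "x = sg + lam"
  have x: "x > 0" "lam \<le> x" using assms unfolding x_def by auto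
  have "lam / x = (lam / x) powr 1" using x assms by simp
  also have "\<dots> \<le> (lam / x) powr s"
    using x assms by (intro powr_mono') auto
  also have "\<dots> = lam powr s * (x powr (- s / 2))\<^sup>2"
    using x assms by (simp add: powr_divide divide_powr_uminus power2_eq_square flip: powr_add)
  finally have "lam / x \<le> lam powr s * (x powr (- s / 2))\<^sup>2" .
  moreover have "sg / x + lam / x = 1" using x(1) by (simp add: x_def flip: add_divide_distrib)
  ultimately show ?thesis unfolding x_def by linarith
qed

lemma spectral_descent_bound:
  fixes lam s :: real
  assumes lam: "lam > 0" and s: "s \<le> 1"
    and N: "finite_measure N" "sets N = sets M" "spd_bounded_kernel M k"
    and eig: "eigen_ONB k N J e \<sigma>" and g: "L2 N g"
    and v: "spec_fun N J e \<sigma> (\<lambda>r. 1 / (r + lam)) (Kop k N g) v"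
    and h: "spec_fun N J e \<sigma> (\<lambda>r. (r + lam) powr (- s / 2)) g h"
  shows "L2norm2 N g \<le> L2ip N g v + lam powr s * L2norm2 N h"
proof -
  define c where "c j = L2ip N g (e j)" for j
  define w where "w j = (\<sigma> j + lam) powr (- s / 2)" for j
  have e: "\<And>j. j \<in> J \<Longrightarrow> L2 N (e j)"
    and orthonormal: "\<forall>i\<in>J. \<forall>j\<in>J. L2ip N (e i) (e j) = (if i = j then 1 else 0)"
    and expansion: "\<And>f. L2 N f \<Longrightarrow> L2_expansion N J (\<lambda>j. L2ip N f (e j)) e f"
    and eigen: "\<And>j. j \<in> J \<Longrightarrow> \<sigma> j \<ge> 0 \<and> (AE x in N. Kop k N (e j) x = \<sigma> j * e j x)"
    using eig unfolding eigen_ONB_def by auto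
  have norm_g: "((\<lambda>j. (c j)\<^sup>2) has_sum L2norm2 N g) J"
    unfolding c_def by (rule L2_expansion_Parseval[OF e orthonormal g expansion[OF g]])
  have norm_h: "((\<lambda>j. (w j * c j)\<^sup>2) has_sum L2norm2 N h) J"
    using h unfolding spec_fun_def c_def w_def by (intro L2_expansion_Parseval[OF e orthonormal]) auto
  have Kg_coeff: "L2ip N (Kop k N g) (e j) = \<sigma> j * c j" if "j \<in> J" for j
    unfolding c_def using eigen[OF that] L2_integrable[OF N(1)] g e[OF that]
    by (intro L2ip_Kop_eigenfunction[OF N]) auto
  have "((\<lambda>j. 1 / (\<sigma> j + lam) * L2ip N (Kop k N g) (e j) * L2ip N g (e j)) has_sum L2ip N g v) J"
    using v unfolding spec_fun_def by (intro L2_expansion_L2ip_has_sum[OF e _ g]) auto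
  then have inner_gv: "((\<lambda>j. \<sigma> j / (\<sigma> j + lam) * (c j)\<^sup>2) has_sum L2ip N g v) J"
    by (rule has_sum_cong[THEN iffD1, rotated]) (simp add: Kg_coeff c_def power2_eq_square)
  have "((\<lambda>j. \<sigma> j / (\<sigma> j + lam) * (c j)\<^sup>2 + lam powr s * (w j * c j)\<^sup>2)
      has_sum (L2ip N g v + lam powr s * L2norm2 N h)) J"
    by (intro has_sum_add inner_gv has_sum_cmult_right norm_h)
  then show ?thesis
  proof (rule has_sum_mono[OF norm_g])
    fix j assume "j \<in> J"
    then have "1 * (c j)\<^sup>2 \<le> (\<sigma> j / (\<sigma> j + lam) + lam powr s * (w j)\<^sup>2) * (c j)\<^sup>2"
      using spectral_weight_ge_one[of "\<sigma> j" lam s] eigen lam s unfolding w_def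
      by (intro mult_right_mono) auto
    then show "(c j)\<^sup>2 \<le> \<sigma> j / (\<sigma> j + lam) * (c j)\<^sup>2 + lam powr s * (w j * c j)\<^sup>2"
      by (simp add: algebra_simps power_mult_distrib)
  qed
qed

theorem mainTheorem18:
  fixes M :: "'a measure" and \<mu> :: "real \<Rightarrow> 'a measure" and k :: "'a \<Rightarrow> 'a \<Rightarrow> real"
    and F :: "'a measure \<Rightarrow> real" and dF :: "'a measure \<Rightarrow> 'a \<Rightarrow> real"
    and lam :: real and T :: "real set"
    and J :: "real \<Rightarrow> 'b set" and e :: "real \<Rightarrow> 'b \<Rightarrow> 'a \<Rightarrow> real" and \<sigma> :: "real \<Rightarrow> 'b \<Rightarrow> real"
    and v :: "real \<Rightarrow> 'a \<Rightarrow> real"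
  assumes lam_pos: "lam > 0"
    and T_open: "open T"
    and kernel: "spd_bounded_kernel M k"
    and meas: "\<And>t. t \<in> T \<Longrightarrow> sets (\<mu> t) = sets M \<and> finite_measure (\<mu> t)"
    and eig: "\<And>t. t \<in> T \<Longrightarrow> eigen_ONB k (\<mu> t) (J t) (e t) (\<sigma> t)"
    and dF_L2: "\<And>t. t \<in> T \<Longrightarrow> L2 (\<mu> t) (dF (\<mu> t))"
    and chain_rule: "\<And>t w. t \<in> T \<Longrightarrow> L2 (\<mu> t) w \<Longrightarrow>
       (\<forall>A\<in>sets M. ((\<lambda>\<tau>. measure (\<mu> \<tau>) A) has_real_derivative
           (\<integral>x. indicator A x * w x \<partial>\<mu> t)) (at t)) \<Longrightarrow>
       ((\<lambda>\<tau>. F (\<mu> \<tau>)) has_real_derivative (\<integral>x. dF (\<mu> t) x * w x \<partial>\<mu> t)) (at t)"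
    and v_def: "\<And>t. t \<in> T \<Longrightarrow>
       spec_fun (\<mu> t) (J t) (e t) (\<sigma> t) (\<lambda>r. 1 / (r + lam)) (Kop k (\<mu> t) (dF (\<mu> t))) (v t)"
    and flow: "\<And>t A. t \<in> T \<Longrightarrow> A \<in> sets M \<Longrightarrow>
       ((\<lambda>\<tau>. measure (\<mu> \<tau>) A) has_real_derivative
           (\<integral>x. indicator A x * (- v t x) \<partial>\<mu> t)) (at t)"
  shows "\<forall>t\<in>T. \<forall>s\<in>{0..1}. \<forall>h.
     spec_fun (\<mu> t) (J t) (e t) (\<sigma> t) (\<lambda>r. (r + lam) powr (- s / 2)) (dF (\<mu> t)) h \<longrightarrow>
     deriv (\<lambda>\<tau>. F (\<mu> \<tau>)) t
       \<le> - L2norm2 (\<mu> t) (dF (\<mu> t)) + lam powr s * L2norm2 (\<mu> t) h"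
proof (intro ballI allI impI)
  fix t s h
  assume t: "t \<in> T" and s: "s \<in> {0..1}"
    and h: "spec_fun (\<mu> t) (J t) (e t) (\<sigma> t) (\<lambda>r. (r + lam) powr (- s / 2)) (dF (\<mu> t)) h"
  have measure: "finite_measure (\<mu> t)" "sets (\<mu> t) = sets M" using meas[OF t] by auto
  have "L2 (\<mu> t) (\<lambda>x. - v t x)"
    using v_def[OF t] L2_cmult[where c="-1"] unfolding spec_fun_def by fastforce
  then have "((\<lambda>\<tau>. F (\<mu> \<tau>)) has_real_derivative (\<integral>x. dF (\<mu> t) x * - v t x \<partial>\<mu> t)) (at t)"
    using chain_rule[OF t] flow[OF t] by blast
  then have "deriv (\<lambda>\<tau>. F (\<mu> \<tau>)) t = - L2ip (\<mu> t) (dF (\<mu> t)) (v t)"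
    unfolding L2ip_def by (simp add: DERIV_imp_deriv)
  moreover have "L2norm2 (\<mu> t) (dF (\<mu> t)) \<le> L2ip (\<mu> t) (dF (\<mu> t)) (v t) + lam powr s * L2norm2 (\<mu> t) h"
    using s by (intro spectral_descent_bound[OF lam_pos _ measure kernel eig[OF t] dF_L2[OF t] v_def[OF t] h]) auto
  ultimately show "deriv (\<lambda>\<tau>. F (\<mu> \<tau>)) t \<le> - L2norm2 (\<mu> t) (dF (\<mu> t)) + lam powr s * L2norm2 (\<mu> t) h"
    by simp
qed

end
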